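(* Consider the networked Cournot game defined in the context, with market maker payoff $\pi^M\in\{W_{soc},W_{res},W_{con}\}$, and assume it is feasible. (i) If $\pi^M=W_{soc}$, then a Generalized Nash Equilibrium (GNE) exists. (ii) If $\pi^M=W_{res}$, then a GNE exists. (iii) If $\pi^M=W_{con}$, a GNE need not exist: there exist a network and parameters for which the game has no GNE. An example is the 2-node network with $a_1=a_2=10$, $b_1=1.2$, $b_2=1$, $c_1=c_2=1$ and line capacity $f_{12}=2$.
   Context: Network model. There are $n$ nodes and $\ell$ transmission lines. Let $H\in\mathbb{R}^{\ell\times n}$ be the shift-factor matrix of a connected power network under the linearized DC power-flow model; the flows on the lines are $-Hr$ when the vector of power injections is $-r$. Let $f\in\mathbb{R}^\ell_{+}$ be the vector of line capacities. Generators. At each node $k$ there is a generator $G_k$. It chooses a quantity $q_k\in S^G_k=\mathbb{R}_+$ and incurs cost $c_kq_k^2$, where $c_k>0$. Demand and prices. Demand at node $k$ has inverse demand $p_k(d)=a_k-b_kd$, where $a_k>0$ and $b_k\ge 0$. Market maker. A market maker $M$ chooses re-balancing quantities $r\in\mathbb{R}^n$ from $$S^M(q)=\{r\in\mathbb{R}^n: q+r\ge 0,\ |Hr|\le f,\ \mathbf{1}^\top r=0\},$$ where inequalities are elementwise. Node $k$ then receives $d_k=q_k+r_k$, and both demand and generator at node $k$ face the price $p_k(q_k+r_k)$. Payoffs. Generator $k$'s profit is $\pi^G_k(q,r)=q_kp_k(q_k+r_k)-c_kq_k^2$. The market maker's payoff $\pi^M$ is one of: - $W_{soc}(q,r)=\sum_k\big(\int_0^{q_k+r_k}p_k(w)\,dw-c_kq_k^2\big)$;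 - $W_{res}(q,r)=\sum_k\big(\int_0^{q_k+r_k}p_k(w)\,dw-q_kp_k(q_k+r_k)\big)$; - $W_{con}(q,r)=\sum_k\big(\int_0^{q_k+r_k}p_k(w)\,dw-(q_k+r_k)p_k(q_k+r_k)\big)$. Feasibility. The game is feasible if there exists $q\in\mathbb{R}^n_+$ with $S^M(q)\neq\emptyset$. GNE. A pair $(q^*,r^* )$ is a GNE if $r^*\in S^M(q^* )$ and both of the following hold: - for every $k$ and every $q_k\ge 0$, $\pi^G_k(q_k^*,q_{-k}^*,r^* )\ge\pi^G_k(q_k,q^*_{-k},r^* )$; - for every $r\in S^M(q^* )$, $\pi^M(q^*,r^* )\ge \pi^M(q^*,r)$. 2-node network. Nodes 1 and 2 are joined by a single line of capacity $f_{12}$. Writing $r_1=r$ and $r_2=-r$, the market maker's feasible set becomes $\{r: -q_1\le r\le q_2,\ -f_{12}\le r\le f_{12}\}$. *)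

theory Defs
  imports "HOL-Analysis.Analysis" "HOL-Library.Numeral_Type"
begin

text \<open>Nodes are the elements of a finite type 'n, lines the elements of a finite type 'l.
  Vectors are functions on these types; H :: 'l => 'n => real is the shift-factor matrix.\<close>

text \<open>Shift-factor matrix of a connected power network (linearized DC model):
  each line e goes from node fr e to node to e (fr e ~= to e) and has susceptance beta e > 0;
  the graph is connected; for every vector of voltage angles theta, the induced line flows are
  beta e * (theta (fr e) - theta (to e)) and the induced nodal net injections are given by
  Kirchhoff's current law; H maps these injections to these flows.  (Since the graph is
  connected every balanced injection arises this way, so this determines H on balanced
  injections, which is all the game uses.)\<close>

definition dc_flow :: "('l \<Rightarrow> 'n) \<Rightarrow> ('l \<Rightarrow> 'n) \<Rightarrow> ('l \<Rightarrow> real) \<Rightarrow> ('n \<Rightarrow> real) \<Rightarrow> 'l \<Rightarrow> real" where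
  "dc_flow fr to \<beta> \<theta> e = \<beta> e * (\<theta> (fr e) - \<theta> (to e))"

definition dc_injection :: "('l::finite \<Rightarrow> 'n) \<Rightarrow> ('l \<Rightarrow> 'n) \<Rightarrow> ('l \<Rightarrow> real) \<Rightarrow> ('n \<Rightarrow> real) \<Rightarrow> 'n \<Rightarrow> real" where
  "dc_injection fr to \<beta> \<theta> k =
     (\<Sum>e\<in>UNIV. (if fr e = k then dc_flow fr to \<beta> \<theta> e else 0)
               - (if to e = k then dc_flow fr to \<beta> \<theta> e else 0))"

definition network_connected :: "('l \<Rightarrow> 'n) \<Rightarrow> ('l \<Rightarrow> 'n) \<Rightarrow> bool" where
  "network_connected fr to \<longleftrightarrow>
     (\<forall>i j. (\<lambda>x y. \<exists>e. (fr e = x \<and> to e = y) \<or> (fr e = y \<and> to e = x))\<^sup>*\<^sup>* i j)"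

definition shift_factor_matrix :: "('l::finite \<Rightarrow> 'n::finite \<Rightarrow> real) \<Rightarrow> bool" where
  "shift_factor_matrix H \<longleftrightarrow>
     (\<exists>fr to \<beta>. (\<forall>e. fr e \<noteq> to e) \<and> (\<forall>e. \<beta> e > 0) \<and> network_connected fr to \<and>
        (\<forall>\<theta> e. (\<Sum>k\<in>UNIV. H e k * dc_injection fr to \<beta> \<theta> k) = dc_flow fr to \<beta> \<theta> e))"

definition price :: "('n \<Rightarrow> real) \<Rightarrow> ('n \<Rightarrow> real) \<Rightarrow> 'n \<Rightarrow> real \<Rightarrow> real" where
  "price a b k d = a k - b k * d"

definition SM :: "('l::finite \<Rightarrow> 'n::finite \<Rightarrow> real) \<Rightarrow> ('l \<Rightarrow> real) \<Rightarrow> ('n \<Rightarrow> real) \<Rightarrow> ('n \<Rightarrow> real) set" where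
  "SM H f q = {r. (\<forall>k. q k + r k \<ge> 0) \<and> (\<forall>e. \<bar>\<Sum>k\<in>UNIV. H e k * r k\<bar> \<le> f e) \<and> (\<Sum>k\<in>UNIV. r k) = 0}"

definition piG :: "('n \<Rightarrow> real) \<Rightarrow> ('n \<Rightarrow> real) \<Rightarrow> ('n \<Rightarrow> real) \<Rightarrow> ('n \<Rightarrow> real) \<Rightarrow> ('n \<Rightarrow> real) \<Rightarrow> 'n \<Rightarrow> real" where
  "piG a b c q r k = q k * price a b k (q k + r k) - c k * (q k)\<^sup>2"

datatype mm_objective = Wsoc | Wres | Wcon

definition piM :: "mm_objective \<Rightarrow> ('n::finite \<Rightarrow> real) \<Rightarrow> ('n \<Rightarrow> real) \<Rightarrow> ('n \<Rightarrow> real) \<Rightarrow> ('n \<Rightarrow> real) \<Rightarrow> ('n \<Rightarrow> real) \<Rightarrow> real" where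
  "piM W a b c q r =
     (\<Sum>k\<in>UNIV. (LBINT w=ereal 0..ereal (q k + r k). price a b k w)
        - (case W of
             Wsoc \<Rightarrow> c k * (q k)\<^sup>2
           | Wres \<Rightarrow> q k * price a b k (q k + r k)
           | Wcon \<Rightarrow> (q k + r k) * price a b k (q k + r k)))"

definition game_feasible :: "('l::finite \<Rightarrow> 'n::finite \<Rightarrow> real) \<Rightarrow> ('l \<Rightarrow> real) \<Rightarrow> bool" where
  "game_feasible H f \<longleftrightarrow> (\<exists>q. (\<forall>k. q k \<ge> 0) \<and> SM H f q \<noteq> {})"

definition is_GNE :: "('l::finite \<Rightarrow> 'n::finite \<Rightarrow> real) \<Rightarrow> ('l \<Rightarrow> real) \<Rightarrow> ('n \<Rightarrow> real) \<Rightarrow> ('n \<Rightarrow> real) \<Rightarrow> ('n \<Rightarrow> real)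
    \<Rightarrow> mm_objective \<Rightarrow> ('n \<Rightarrow> real) \<Rightarrow> ('n \<Rightarrow> real) \<Rightarrow> bool" where
  "is_GNE H f a b c W q r \<longleftrightarrow>
     (\<forall>k. q k \<ge> 0) \<and> r \<in> SM H f q \<and>
     (\<forall>k x. x \<ge> 0 \<longrightarrow> piG a b c q r k \<ge> piG a b c (q(k := x)) r k) \<and>
     (\<forall>r' \<in> SM H f q. piM W a b c q r \<ge> piM W a b c q r')"

end

theory Submission imports Defs begin

text \<open>
  With linear inverse demand every payoff is an explicit quadratic.  Given the
  re-balancing vector r, generator k faces the concave profit x (a_k - b_k r_k) - (b_k+c_k) x^2,
  whose unique maximiser on x >= 0 is the best response  max 0 ((a_k - b_k r_k)/(2(b_k+c_k))).

  Parts (i) and (ii) use a potential argument.  Up to a term depending only on q, the market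
  maker's payoff W_res is the consumer value V(r) = sum_k (a_k r_k - b_k r_k^2/2), and W_soc is
  V(r) plus the generators' joint profit.  Let P(r) be V(r), plus for W_soc the generators'
  optimal joint profit.  P is continuous, so it attains its maximum at some r on the compact
  set of balanced, line-feasible r bounded below by -a/(b+2c).  Setting q = best response to r,
  the generators are optimal by construction, and by the envelope inequality (optimal profit
  dominates the profit of q) r is also optimal for the market maker within S^M(q).
  The zero re-balancing is always admissible there.

  Part (iii) is a concrete computation on the 2-node network: the generators' quantities are
  forced to be the best responses, the market maker then maximises a strictly convex quadratic
  in the line flow, so the flow would have to sit at an end of its interval; both ends fail.
\<close>

section \<open>Closed forms of the payoffs\<close>

lemma integral_inverse_demand:
  "(LBINT w=ereal 0..ereal d. price a b k w) = a k * d - b k * d\<^sup>2 / 2"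
proof -
  have "(LBINT w=ereal 0..ereal d. a k - b k * w)
          = (a k * d - b k * d\<^sup>2 / 2) - (a k * 0 - b k * 0\<^sup>2 / 2)"
    by (rule interval_integral_FTC_finite)
       (auto intro!: continuous_intros derivative_eq_intros
             simp: has_real_derivative_iff_has_vector_derivative[symmetric])
  then show ?thesis by (simp add: price_def)
qed

lemma piG_quadratic: "piG a b c q r k = q k * (a k - b k * r k) - (b k + c k) * (q k)\<^sup>2"
  by (simp add: piG_def price_def power2_eq_square algebra_simps)

text \<open>Consumer value of the re-balancing r: the part of W_res and W_soc that depends on r only.\<close>
definition consumer_value :: "('n::finite \<Rightarrow> real) \<Rightarrow> ('n \<Rightarrow> real) \<Rightarrow> ('n \<Rightarrow> real) \<Rightarrow> real" where
  "consumer_value a b r = (\<Sum>k\<in>UNIV. a k * r k - b k * (r k)\<^sup>2 / 2)"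

lemma piM_Wres:
  "piM Wres a b c q r = consumer_value a b r + (\<Sum>k\<in>UNIV. b k * (q k)\<^sup>2 / 2)"
  unfolding piM_def integral_inverse_demand consumer_value_def sum.distrib[symmetric]
  by (rule sum.cong) (simp_all add: price_def power2_eq_square field_simps)

lemma piM_Wsoc:
  "piM Wsoc a b c q r = (\<Sum>k\<in>UNIV. piG a b c q r k) + piM Wres a b c q r"
  unfolding piM_def integral_inverse_demand piG_quadratic sum.distrib[symmetric]
  by (rule sum.cong) (simp_all add: price_def power2_eq_square field_simps)

lemma piM_Wcon: "piM Wcon a b c q r = (\<Sum>k\<in>UNIV. b k * (q k + r k)\<^sup>2 / 2)"
  unfolding piM_def integral_inverse_demand
  by (rule sum.cong) (simp_all add: price_def power2_eq_square field_simps)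

section \<open>Best responses of the generators\<close>

lemma concave_quadratic_max:
  fixes A B x :: real
  assumes "B > 0" "x \<ge> 0"
  shows "x * A - B * x\<^sup>2 \<le> max 0 (A / (2*B)) * A - B * (max 0 (A / (2*B)))\<^sup>2"
proof (cases "A \<le> 0")
  case True
  then have "max 0 (A / (2*B)) = 0" using assms by (simp add: divide_nonpos_pos)
  moreover have "x * A \<le> 0" using True assms by (simp add: mult_nonneg_nonpos)
  moreover have "B * x\<^sup>2 \<ge> 0" using assms by simp
  ultimately show ?thesis by simp
next
  case False
  then have m: "max 0 (A / (2*B)) = A / (2*B)" using assms by simp
  have "max 0 (A / (2*B)) * A - B * (max 0 (A / (2*B)))\<^sup>2 - (x * A - B * x\<^sup>2)
          = (A - 2*B*x)\<^sup>2 / (4*B)"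
    unfolding m using assms by (simp add: field_simps power2_eq_square)
  moreover have "(A - 2*B*x)\<^sup>2 / (4*B) \<ge> 0" using assms by simp
  ultimately show ?thesis by linarith
qed

lemma concave_quadratic_argmax_unique:
  fixes A B x :: real
  assumes "B > 0" "x \<ge> 0" and opt: "\<And>y. y \<ge> 0 \<Longrightarrow> y * A - B * y\<^sup>2 \<le> x * A - B * x\<^sup>2"
  shows "x = max 0 (A / (2*B))"
proof (cases "A \<le> 0")
  case True
  have "0 \<le> x * A - B * x\<^sup>2" using opt[of 0] by simp
  moreover have "x * A \<le> 0" using True assms by (simp add: mult_nonneg_nonpos)
  moreover have "B * x\<^sup>2 \<ge> 0" using assms by simp
  ultimately have "B * x\<^sup>2 = 0" by linarith
  then have "x = 0" using assms by simp
  then show ?thesis using True assms by (simp add: divide_nonpos_pos)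
next
  case False
  have "A / (2*B) * A - B * (A / (2*B))\<^sup>2 - (x * A - B * x\<^sup>2) = (A - 2*B*x)\<^sup>2 / (4*B)"
    using assms by (simp add: field_simps power2_eq_square)
  moreover have "A / (2*B) * A - B * (A / (2*B))\<^sup>2 \<le> x * A - B * x\<^sup>2"
    using False assms by (intro opt) simp
  ultimately have "(A - 2*B*x)\<^sup>2 / (4*B) \<le> 0" using False by simp
  then have "(A - 2*B*x)\<^sup>2 \<le> 0" using assms by (simp add: divide_le_0_iff)
  then have "x = A / (2*B)" using assms by (simp add: field_simps)
  then show ?thesis using False assms by simp
qed

definition best_response :: "('n \<Rightarrow> real) \<Rightarrow> ('n \<Rightarrow> real) \<Rightarrow> ('n \<Rightarrow> real) \<Rightarrow> ('n \<Rightarrow> real) \<Rightarrow> 'n \<Rightarrow> real" where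
  "best_response a b c r k = max 0 ((a k - b k * r k) / (2 * (b k + c k)))"

lemma best_response_nonneg: "best_response a b c r k \<ge> 0"
  by (simp add: best_response_def)

lemma best_response_optimal:
  assumes "b k + c k > 0" "q k = best_response a b c r k" "x \<ge> 0"
  shows "piG a b c (q(k := x)) r k \<le> piG a b c q r k"
  using concave_quadratic_max[OF assms(1) assms(3), of "a k - b k * r k"] assms(2)
  by (simp add: piG_quadratic best_response_def)

lemma best_response_forced:
  assumes "b k + c k > 0" "q k \<ge> 0"
    and opt: "\<And>x. x \<ge> 0 \<Longrightarrow> piG a b c (q(k := x)) r k \<le> piG a b c q r k"
  shows "q k = best_response a b c r k"
  unfolding best_response_def
  by (rule concave_quadratic_argmax_unique[OF assms(1,2)]) (use opt in \<open>simp add: piG_quadratic\<close>)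

text \<open>If r_k >= -a_k/(b_k+2c_k), the best response keeps the delivered quantity non-negative
  and is itself at most a_k/(b_k+2c_k); this makes the bound on r self-consistent.\<close>
lemma best_response_bounds:
  fixes a b c r :: real
  assumes "a > 0" "b \<ge> 0" "c > 0" "r \<ge> - a / (b + 2*c)"
  shows "0 \<le> max 0 ((a - b*r) / (2*(b+c))) + r" "max 0 ((a - b*r) / (2*(b+c))) \<le> a / (b + 2*c)"
proof -
  have pos: "b + 2*c > 0" "b + c > 0" using assms by auto
  have r: "r * (b + 2*c) \<ge> - a" using assms(4) pos by (simp add: field_simps)
  show "0 \<le> max 0 ((a - b*r) / (2*(b+c))) + r"
  proof (cases "r \<ge> 0")
    case False
    have "(a - b*r) / (2*(b+c)) + r = (a + r*(b+2*c)) / (2*(b+c))" using pos by (simp add: field_simps)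
    also have "\<dots> \<ge> 0" using r pos by simp
    finally show ?thesis by linarith
  qed simp
  have "b * (a + r*(b+2*c)) \<ge> 0" using r assms by simp
  then have "(a - b*r) * (b + 2*c) \<le> a * (2*(b+c))" by (simp add: algebra_simps)
  then have "(a - b*r) / (2*(b+c)) \<le> a / (b + 2*c)" using pos by (simp add: field_simps)
  moreover have "0 \<le> a / (b + 2*c)" using pos assms by simp
  ultimately show "max 0 ((a - b*r) / (2*(b+c))) \<le> a / (b + 2*c)" by simp
qed

section \<open>The market maker's maximisation problem\<close>

text \<open>Balanced, line-feasible re-balancings bounded below by L; for suitable L this set
  contains S^M(q) whenever q is a best response, and it does not depend on q.\<close>
definition bounded_rebalancings ::
    "('l::finite \<Rightarrow> 'n::finite \<Rightarrow> real) \<Rightarrow> ('l \<Rightarrow> real) \<Rightarrow> ('n \<Rightarrow> real) \<Rightarrow> ('n \<Rightarrow> real) set" where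
  "bounded_rebalancings H f L =
     {r. (\<Sum>k\<in>UNIV. r k) = 0 \<and> (\<forall>e. \<bar>\<Sum>k\<in>UNIV. H e k * r k\<bar> \<le> f e) \<and> (\<forall>k. L k \<le> r k)}"

lemma zero_sum_component_bound:
  fixes x L :: "'n::finite \<Rightarrow> real"
  assumes sum0: "(\<Sum>k\<in>UNIV. x k) = 0" and lower: "\<And>k. L k \<le> x k"
  shows "\<bar>x i\<bar> \<le> (\<Sum>k\<in>UNIV. \<bar>L k\<bar>)"
proof -
  have "(\<Sum>k\<in>UNIV. x k) = x i + (\<Sum>k\<in>UNIV-{i}. x k)" by (simp add: sum.remove)
  moreover have "(\<Sum>k\<in>UNIV-{i}. x k) \<ge> (\<Sum>k\<in>UNIV-{i}. - \<bar>L k\<bar>)"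
    by (rule sum_mono) (rule order_trans[OF _ lower], simp)
  moreover have "(\<Sum>k\<in>UNIV-{i}. \<bar>L k\<bar>) + \<bar>L i\<bar> = (\<Sum>k\<in>UNIV. \<bar>L k\<bar>)"
    by (simp add: sum.remove add.commute)
  moreover have "- (\<Sum>k\<in>UNIV-{i}. \<bar>L k\<bar>) = (\<Sum>k\<in>UNIV-{i}. - \<bar>L k\<bar>)"
    by (simp add: sum_negf)
  moreover have "(\<Sum>k\<in>UNIV-{i}. \<bar>L k\<bar>) \<ge> 0" "- L i \<le> \<bar>L i\<bar>" by (simp_all add: sum_nonneg)
  ultimately show ?thesis using sum0 lower[of i] by linarith
qed

lemma bounded_rebalancings_attain_max:
  fixes H :: "'l::finite \<Rightarrow> 'n::finite \<Rightarrow> real" and J :: "('n \<Rightarrow> real) \<Rightarrow> real"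
  assumes L: "\<And>k. L k \<le> 0" and f: "\<And>e. f e \<ge> 0"
    and cont: "continuous_on UNIV (\<lambda>x::real^'n. J (\<lambda>k. x$k))"
  shows "\<exists>r\<in>bounded_rebalancings H f L. \<forall>r'\<in>bounded_rebalancings H f L. J r' \<le> J r"
proof -
  define S where "S = {x::real^'n. (\<lambda>k. x$k) \<in> bounded_rebalancings H f L}"
  have "bounded S"
    unfolding bounded_iff
  proof (intro exI ballI)
    fix x assume "x \<in> S"
    have "norm x \<le> (\<Sum>i\<in>UNIV. \<bar>x$i\<bar>)" by (rule norm_le_l1_cart)
    also have "\<dots> \<le> (\<Sum>i\<in>(UNIV::'n set). \<Sum>k\<in>UNIV. \<bar>L k\<bar>)"
      using \<open>x \<in> S\<close> by (intro sum_mono zero_sum_component_bound[of "\<lambda>k. x$k" L])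
                        (auto simp: S_def bounded_rebalancings_def)
    finally show "norm x \<le> (\<Sum>i\<in>(UNIV::'n set). \<Sum>k\<in>UNIV. \<bar>L k\<bar>)" .
  qed
  moreover have "closed S"
    unfolding S_def bounded_rebalancings_def mem_Collect_eq
    by (intro closed_Collect_conj closed_Collect_all closed_Collect_eq closed_Collect_le
              continuous_intros)
  moreover have "0 \<in> S" using L f by (simp add: S_def bounded_rebalancings_def)
  ultimately obtain x where x: "x \<in> S" "\<And>y. y \<in> S \<Longrightarrow> J (\<lambda>k. y$k) \<le> J (\<lambda>k. x$k)"
    using continuous_attains_sup[of S "\<lambda>x. J (\<lambda>k. x$k)"] continuous_on_subset[OF cont]
    by (auto simp: compact_eq_bounded_closed)
  show ?thesis
  proof (intro bexI ballI)
    show "(\<lambda>k. x$k) \<in> bounded_rebalancings H f L" using x(1) by (simp add: S_def)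
    fix r' assume "r' \<in> bounded_rebalancings H f L"
    then have "(\<chi> k. r' k) \<in> S" by (simp add: S_def vec_lambda_beta[abs_def])
    from x(2)[OF this] show "J r' \<le> J (\<lambda>k. x$k)" by simp
  qed
qed

definition producer_value :: "('n::finite \<Rightarrow> real) \<Rightarrow> ('n \<Rightarrow> real) \<Rightarrow> ('n \<Rightarrow> real) \<Rightarrow> ('n \<Rightarrow> real) \<Rightarrow> real" where
  "producer_value a b c r = (\<Sum>k\<in>UNIV. piG a b c (best_response a b c r) r k)"

lemma producer_value_envelope:
  assumes "\<And>k. b k + c k > 0" "\<And>k. q k \<ge> 0"
  shows "(\<Sum>k\<in>UNIV. piG a b c q r k) \<le> producer_value a b c r"
  unfolding producer_value_def piG_quadratic best_response_def
  by (rule sum_mono) (rule concave_quadratic_max[OF assms])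

text \<open>The potential maximised by the market maker: it differs from W_res resp. W_soc by a
  term depending on q only, once q is a best response.\<close>
definition mm_potential :: "mm_objective \<Rightarrow> ('n::finite \<Rightarrow> real) \<Rightarrow> ('n \<Rightarrow> real) \<Rightarrow> ('n \<Rightarrow> real) \<Rightarrow> ('n \<Rightarrow> real) \<Rightarrow> real" where
  "mm_potential W a b c r =
     consumer_value a b r + (if W = Wsoc then producer_value a b c r else 0)"

lemma mm_potential_continuous:
  assumes "\<And>k. b k + c k > 0"
  shows "continuous_on UNIV (\<lambda>x::real^'n::finite. mm_potential W a b c (\<lambda>k. x$k))"
proof -
  have "2 * b k + 2 * c k \<noteq> 0" for k using assms[of k] by linarith
  then show ?thesis
    unfolding mm_potential_def consumer_value_def producer_value_def piG_quadratic
      best_response_def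
    by (cases "W = Wsoc") (auto intro!: continuous_intros continuous_on_max)
qed

lemma piM_le_potential:
  assumes "W = Wsoc \<or> W = Wres" "\<And>k. b k + c k > 0" "\<And>k. q k \<ge> 0"
  shows "piM W a b c q r \<le> mm_potential W a b c r + (\<Sum>k\<in>UNIV. b k * (q k)\<^sup>2 / 2)"
  using assms producer_value_envelope[where a=a and r=r, OF assms(2,3)]
  by (auto simp: mm_potential_def piM_Wsoc piM_Wres)

lemma piM_best_response:
  assumes "W = Wsoc \<or> W = Wres" "q = best_response a b c r"
  shows "piM W a b c q r = mm_potential W a b c r + (\<Sum>k\<in>UNIV. b k * (q k)\<^sup>2 / 2)"
  using assms by (auto simp: mm_potential_def piM_Wsoc piM_Wres producer_value_def)

section \<open>Existence of a GNE for W_soc and W_res\<close>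

lemma potential_maximiser_is_GNE:
  fixes H :: "'l::finite \<Rightarrow> 'n::finite \<Rightarrow> real"
  assumes a: "\<And>k. a k > 0" and b: "\<And>k. b k \<ge> 0" and c: "\<And>k. c k > 0"
    and W: "W = Wsoc \<or> W = Wres"
    and L_def: "L = (\<lambda>k. - a k / (b k + 2 * c k))"
    and r: "r \<in> bounded_rebalancings H f L"
    and rmax: "\<And>r'. r' \<in> bounded_rebalancings H f L \<Longrightarrow>
                     mm_potential W a b c r' \<le> mm_potential W a b c r"
  shows "is_GNE H f a b c W (best_response a b c r) r"
proof -
  define q where "q = best_response a b c r"
  have bc: "b k + c k > 0" for k using b[of k] c[of k] by (simp add: add_nonneg_pos)
  have bounds: "0 \<le> q k + r k" "q k \<le> - L k" for k
    using best_response_bounds[OF a[of k] b[of k] c[of k], of "r k"] r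
    by (simp_all add: q_def best_response_def L_def bounded_rebalancings_def)
  have q_nonneg: "q k \<ge> 0" for k by (simp add: q_def best_response_nonneg)
  have r_SM: "r \<in> SM H f q" using r bounds by (simp add: SM_def bounded_rebalancings_def)
  have SM_sub: "r' \<in> bounded_rebalancings H f L" if "r' \<in> SM H f q" for r'
  proof -
    have "L k \<le> r' k" for k
    proof -
      have "q k + r' k \<ge> 0" using that by (simp add: SM_def)
      then show ?thesis using bounds(2)[of k] by linarith
    qed
    then show ?thesis using that by (simp add: SM_def bounded_rebalancings_def)
  qed
  have generators: "piG a b c (q(k := x)) r k \<le> piG a b c q r k" if "x \<ge> 0" for k x
    using best_response_optimal[of b k c q a r x] bc that by (simp add: q_def)
  have market_maker: "piM W a b c q r' \<le> piM W a b c q r" if "r' \<in> SM H f q" for r'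
  proof -
    have "piM W a b c q r' \<le> mm_potential W a b c r' + (\<Sum>k\<in>UNIV. b k * (q k)\<^sup>2 / 2)"
      by (rule piM_le_potential) (use W bc q_nonneg in auto)
    then show ?thesis
      using rmax[OF SM_sub[OF that]] piM_best_response[OF W q_def] by linarith
  qed
  show ?thesis
    unfolding is_GNE_def q_def[symmetric] using q_nonneg r_SM generators market_maker by blast
qed

lemma GNE_exists:
  fixes H :: "'l::finite \<Rightarrow> 'n::finite \<Rightarrow> real"
  assumes f: "\<And>e. f e \<ge> 0" and a: "\<And>k. a k > 0" and b: "\<And>k. b k \<ge> 0" and c: "\<And>k. c k > 0"
    and W: "W = Wsoc \<or> W = Wres"
  shows "\<exists>q r. is_GNE H f a b c W q r"
proof -
  define L where "L = (\<lambda>k. - a k / (b k + 2 * c k))"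
  have "L k \<le> 0" for k using a[of k] b[of k] c[of k] by (simp add: L_def)
  moreover have "b k + c k > 0" for k using b[of k] c[of k] by (simp add: add_nonneg_pos)
  ultimately obtain r where "r \<in> bounded_rebalancings H f L"
      "\<forall>r'\<in>bounded_rebalancings H f L. mm_potential W a b c r' \<le> mm_potential W a b c r"
    using bounded_rebalancings_attain_max[of L f "mm_potential W a b c"] f
      mm_potential_continuous by blast
  then show ?thesis
    using potential_maximiser_is_GNE[OF a b c W L_def] by blast
qed

section \<open>The 2-node counterexample for W_con\<close>

lemma numeral_2_eq_0_mod_2: "(2::2) = 0"
  by simp

lemma UNIV_2_sum: "sum g (UNIV::2 set) = g 0 + g 1"
  by (simp only: sum_2 numeral_2_eq_0_mod_2 add.commute)

lemma convex_quadratic_max_at_endpoint: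
  fixes g :: "real \<Rightarrow> real"
  assumes g: "\<And>y. g y = \<alpha> * y\<^sup>2 + \<beta> * y + \<gamma>" and "\<alpha> > 0"
    and "lo \<le> p" "p \<le> hi" and lo: "g lo \<le> g p" and hi: "g hi \<le> g p"
  shows "p = lo \<or> p = hi"
proof (rule ccontr)
  assume "\<not> (p = lo \<or> p = hi)"
  then have interior: "lo < p" "p < hi" using assms by auto
  have diff: "g x - g y = (x - y) * (\<alpha> * (x + y) + \<beta>)" for x y
    by (simp add: g power2_eq_square algebra_simps)
  have "(p - hi) * (\<alpha> * (p + hi) + \<beta>) \<ge> 0" using hi diff[of p hi] by simp
  then have "\<alpha> * (p + hi) + \<beta> \<le> 0" using interior by (simp add: zero_le_mult_iff)
  moreover have "(p - lo) * (\<alpha> * (p + lo) + \<beta>) \<ge> 0" using lo diff[of p lo] by simp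
  then have "\<alpha> * (p + lo) + \<beta> \<ge> 0" using interior by (simp add: zero_le_mult_iff)
  ultimately have "\<alpha> * (hi - lo) \<le> 0" by (simp add: algebra_simps)
  then show False using interior \<open>\<alpha> > 0\<close> by (simp add: mult_le_0_iff)
qed

text \<open>The data of the 2-node example: one line of capacity 2 from node 0 to node 1, whose
  flow equals the net withdrawal r_0 at node 0.\<close>
definition example_H :: "1 \<Rightarrow> 2 \<Rightarrow> real" where
  "example_H = (\<lambda>e k. if k = 0 then 1 else 0)"
definition example_f :: "1 \<Rightarrow> real" where "example_f = (\<lambda>e. 2)"
definition example_a :: "2 \<Rightarrow> real" where "example_a = (\<lambda>k. 10)"
definition example_b :: "2 \<Rightarrow> real" where "example_b = (\<lambda>k. if k = 0 then 1.2 else 1)"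
definition example_c :: "2 \<Rightarrow> real" where "example_c = (\<lambda>k. 1)"

lemma example_shift_factor_matrix: "shift_factor_matrix example_H"
proof -
  let ?fr = "\<lambda>e::1. 0::2" and ?to = "\<lambda>e::1. 1::2" and ?\<beta> = "\<lambda>e::1. 1::real"
  have connected: "network_connected ?fr ?to"
    unfolding network_connected_def
  proof (intro allI)
    fix i j :: 2
    have "i = j \<or> (i = 0 \<and> j = 1) \<or> (i = 1 \<and> j = 0)"
      using exhaust_2[of i] exhaust_2[of j] by auto
    then show "(\<lambda>x y. \<exists>e::1. (?fr e = x \<and> ?to e = y) \<or> (?fr e = y \<and> ?to e = x))\<^sup>*\<^sup>* i j"
      by (auto intro: r_into_rtranclp)
  qed
  have "(\<Sum>k\<in>UNIV. example_H e k * dc_injection ?fr ?to ?\<beta> \<theta> k) = dc_flow ?fr ?to ?\<beta> \<theta> e"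
    for \<theta> e
    by (simp add: example_H_def UNIV_2_sum dc_injection_def dc_flow_def)
  then show ?thesis
    unfolding shift_factor_matrix_def using connected
    by (intro exI[of _ ?fr] exI[of _ ?to] exI[of _ ?\<beta>]) simp
qed

lemma example_feasible: "game_feasible example_H example_f"
  unfolding game_feasible_def
  by (rule exI[of _ "\<lambda>k. 0"]) (auto simp: SM_def example_f_def intro!: exI[of _ "\<lambda>k. 0"])

lemma example_SM:
  "r \<in> SM example_H example_f q \<longleftrightarrow>
     q 0 + r 0 \<ge> 0 \<and> q 1 + r 1 \<ge> 0 \<and> \<bar>r 0\<bar> \<le> 2 \<and> r 0 + r 1 = 0"
  by (auto simp: SM_def UNIV_2_sum forall_2 numeral_2_eq_0_mod_2 example_H_def example_f_def)

lemma example_no_GNE: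
  "\<not> (\<exists>q r. is_GNE example_H example_f example_a example_b example_c Wcon q r)"
proof
  assume "\<exists>q r. is_GNE example_H example_f example_a example_b example_c Wcon q r"
  then obtain q r where GNE: "is_GNE example_H example_f example_a example_b example_c Wcon q r"
    by blast
  define p where "p = r 0"
  have "r \<in> SM example_H example_f q" using GNE by (simp add: is_GNE_def)
  then have r1: "r 1 = - p" and p_bound: "\<bar>p\<bar> \<le> 2" and d0: "q 0 + p \<ge> 0"
    unfolding example_SM p_def by auto
  have best: "q k = best_response example_a example_b example_c r k" for k
    by (rule best_response_forced) (use GNE in \<open>auto simp: is_GNE_def example_b_def example_c_def\<close>)
  have q0: "q 0 = (50 - 6*p) / 22"
    using best[of 0] p_bound by (simp add: best_response_def example_a_def example_b_def example_c_def p_def)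
  have q1: "q 1 = (10 + p) / 4"
    using best[of 1] p_bound r1 by (simp add: best_response_def example_a_def example_b_def example_c_def)
  text \<open>The market maker's payoff as a function of the flow y is the convex quadratic g.\<close>
  define g where "g y = 3/5 * (q 0 + y)\<^sup>2 + 1/2 * (q 1 - y)\<^sup>2" for y
  have g_quadratic: "g y = 11/10 * y\<^sup>2 + (6/5 * q 0 - q 1) * y + (3/5 * (q 0)\<^sup>2 + 1/2 * (q 1)\<^sup>2)"
    for y by (simp add: g_def power2_eq_square algebra_simps)
  have payoff: "piM Wcon example_a example_b example_c q (\<lambda>k. if k = 0 then y else - y) = g y" for y
    by (simp add: piM_Wcon UNIV_2_sum g_def example_b_def)
  have "(\<lambda>k. if k = 0 then p else - p) = r"
  proof
    fix k :: 2
    show "(if k = 0 then p else - p) = r k"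
      using r1 exhaust_2[of k] by (auto simp: p_def numeral_2_eq_0_mod_2)
  qed
  then have g_max: "g y \<le> g p" if "q 0 + y \<ge> 0" "q 1 - y \<ge> 0" "\<bar>y\<bar> \<le> 2" for y
  proof -
    have "(\<lambda>k. if k = 0 then y else - y) \<in> SM example_H example_f q"
      using that unfolding example_SM by simp
    then show ?thesis
      using GNE payoff[of y] payoff[of p] \<open>_ = r\<close> unfolding is_GNE_def by auto
  qed
  define lo where "lo = max (- q 0) (-2)"
  have "q 1 \<ge> 2" "lo \<le> p" "p \<le> 2" using q1 p_bound d0 by (auto simp: lo_def)
  have g_hi: "g 2 \<le> g p" and g_lo: "g lo \<le> g p"
    using q0 q1 p_bound \<open>q 1 \<ge> 2\<close> by (auto simp: lo_def intro!: g_max)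
  have "p = lo \<or> p = 2"
    by (rule convex_quadratic_max_at_endpoint[OF g_quadratic _ \<open>lo \<le> p\<close> \<open>p \<le> 2\<close> g_lo g_hi]) simp
  then show False
  proof
    assume "p = 2"
    then have "lo = -19/11" using q0 by (simp add: lo_def)
    then show False using g_lo \<open>p = 2\<close> q0 q1 by (simp add: g_def power2_eq_square)
  next
    assume "p = lo"
    then consider "p = - q 0" | "p = -2" unfolding lo_def by linarith
    then show False
    proof cases
      case 1
      then have "16 * p = -50" using q0 by (simp add: field_simps)
      then show False using p_bound by simp
    next
      case 2
      then show False using g_hi q0 q1 by (simp add: g_def power2_eq_square)
    qed
  qed
qed

theorem theorem1:
  shows
  "(\<forall>(H :: 'l::finite \<Rightarrow> 'n::finite \<Rightarrow> real) f a b c.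
      shift_factor_matrix H \<and> (\<forall>e. f e \<ge> 0) \<and> (\<forall>k. a k > 0) \<and> (\<forall>k. b k \<ge> 0) \<and> (\<forall>k. c k > 0)
      \<and> game_feasible H f
      \<longrightarrow> (\<exists>q r. is_GNE H f a b c Wsoc q r) \<and> (\<exists>q r. is_GNE H f a b c Wres q r))
   \<and> (let H = (\<lambda>(e::1) (k::2). if k = 0 then 1 else 0 :: real);
          f = (\<lambda>e::1. 2 :: real);
          a = (\<lambda>k::2. 10 :: real);
          b = (\<lambda>k::2. if k = 0 then 1.2 else 1 :: real);
          c = (\<lambda>k::2. 1 :: real)
      in shift_factor_matrix H \<and> game_feasible H f \<and> \<not> (\<exists>q r. is_GNE H f a b c Wcon q r))"
proof (intro conjI allI impI)
  fix H :: "'l::finite \<Rightarrow> 'n::finite \<Rightarrow> real" and f :: "'l \<Rightarrow> real" and a b c :: "'n \<Rightarrow> real"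
  assume "shift_factor_matrix H \<and> (\<forall>e. f e \<ge> 0) \<and> (\<forall>k. a k > 0) \<and> (\<forall>k. b k \<ge> 0)
      \<and> (\<forall>k. c k > 0) \<and> game_feasible H f"
  then show "\<exists>q r. is_GNE H f a b c Wsoc q r" "\<exists>q r. is_GNE H f a b c Wres q r"
    by (auto intro: GNE_exists)
next
  show "let H = (\<lambda>(e::1) (k::2). if k = 0 then 1 else 0 :: real);
          f = (\<lambda>e::1. 2 :: real);
          a = (\<lambda>k::2. 10 :: real);
          b = (\<lambda>k::2. if k = 0 then 1.2 else 1 :: real);
          c = (\<lambda>k::2. 1 :: real)
      in shift_factor_matrix H \<and> game_feasible H f \<and> \<not> (\<exists>q r. is_GNE H f a b c Wcon q r)"
    using example_shift_factor_matrix example_feasible example_no_GNE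
    unfolding example_H_def example_f_def example_a_def example_b_def example_c_def Let_def
    by blast
qed

end
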